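(* For every positive integer $\gamma$ there exist infinitely many finite groups $G$ (pairwise non-isomorphic) having exactly $d(|G|)+\gamma$ cyclic subgroups; for instance, for every integer $u\ge1$, the group $G=C_3\rtimes C_{2^u 5^{\gamma-1}}$, where a generator of $C_{2^u5^{\gamma-1}}$ acts on $C_3$ by inversion, has this property.
   Context: $C_k$ denotes the cyclic group of order $k$; $d(k)$ denotes the number of positive divisors of $k$. *)

theory Defs
  imports "HOL-Algebra.Algebra"
begin

definition num_divisors :: "nat \<Rightarrow> nat" where
  "num_divisors k = card {m. 0 < m \<and> m dvd k}"

definition cyclic_subgroups :: "('a, 'b) monoid_scheme \<Rightarrow> 'a set set" where
  "cyclic_subgroups G = {H. \<exists>g \<in> carrier G. H = generate G {g}}"

text \<open>The semidirect product C_3 \<rtimes> C_n, where a generator of C_n acts on C_3 by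
  inversion (well defined as a group when n is even).\<close>
definition C3_sdp :: "nat \<Rightarrow> (int \<times> int) monoid" where
  "C3_sdp n = \<lparr> carrier = {0..<3} \<times> {0..<int n},
      monoid.mult = (\<lambda>(a, b) (c, d). ((a + (if even b then c else - c)) mod 3, (b + d) mod int n)),
      monoid.one = (0, 0) \<rparr>"

end

theory Submission
  imports Defs "HOL-Number_Theory.Cong"
begin

text \<open>Let \<open>n\<close> be even and prime to 3, and \<open>G = C\<^sub>3 \<rtimes> C\<^sub>n\<close>. A pair \<open>(a, b)\<close> with \<open>b\<close> even
  lies in the abelian subgroup \<open>C\<^sub>3 \<times> 2C\<^sub>n\<close>, and by the Chinese remainder theorem it generates
  \<open>\<langle>a\<rangle> \<times> dC\<^sub>n\<close> with \<open>d = gcd b n\<close> even. A pair with \<open>b\<close> odd generates a twisted copy of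
  \<open>dC\<^sub>n\<close>, \<open>d\<close> odd, which still remembers \<open>a\<close>. So \<open>G\<close> has \<open>2e + 3o\<close> cyclic subgroups, where
  \<open>e\<close> and \<open>o\<close> count the even and odd divisors of \<open>n\<close>, while \<open>d(|G|) = d(3n) = 2(e + o)\<close>.
  The excess \<open>o\<close> equals \<open>\<gamma>\<close> for \<open>n = 2^u 5^(\<gamma>-1)\<close>, and different \<open>u\<close> give different orders.\<close>

lemma even_mod_even_iff: "even (N::int) \<Longrightarrow> even (x mod N) \<longleftrightarrow> even x"
  by (simp add: even_iff_mod_2_eq_zero mod_mod_cancel)

lemma range_pair_of_coprime_periods:
  fixes f :: "nat \<Rightarrow> 'a" and g :: "nat \<Rightarrow> 'b"
  assumes "coprime m n" and "\<And>k. f k = f (k mod m)" and "\<And>k. g k = g (k mod n)"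
  shows "range (\<lambda>k. (f k, g k)) = range f \<times> range g"
proof (intro equalityI subsetI)
  fix p assume "p \<in> range f \<times> range g"
  then obtain i j where p: "p = (f i, g j)" by auto
  obtain k where "[k = i] (mod m)" "[k = j] (mod n)"
    using binary_chinese_remainder_nat[OF assms(1)] by blast
  then have "f k = f i" "g k = g j"
    unfolding cong_def by (metis assms(2), metis assms(3))
  then show "p \<in> range (\<lambda>k. (f k, g k))"
    unfolding p by (intro image_eqI[where x = k]) simp_all
qed auto

lemma finite_divisors_with:
  "(n::nat) > 0 \<Longrightarrow> finite {d. d dvd n \<and> P d}"
  by (rule finite_subset[of _ "{..n}"]) (auto dest: dvd_imp_le)

lemma num_divisors_by_parity:
  "(n::nat) > 0 \<Longrightarrow> num_divisors n = card {d. d dvd n \<and> even d} + card {d. d dvd n \<and> odd d}"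
proof -
  assume "n > 0"
  then have "{m. 0 < m \<and> m dvd n} = {d. d dvd n \<and> even d} \<union> {d. d dvd n \<and> odd d}"
    by (auto intro: dvd_pos_nat)
  moreover have "finite {d. d dvd n \<and> even d}" "finite {d. d dvd n \<and> odd d}"
    using finite_divisors_with[OF \<open>n > 0\<close>, of even] finite_divisors_with[OF \<open>n > 0\<close>, of odd]
    by simp_all
  ultimately show ?thesis
    by (simp add: num_divisors_def card_Un_disjoint disjoint_iff)
qed

lemma num_divisors_prime_mult:
  fixes p n :: nat
  assumes "Factorial_Ring.prime p" "n > 0" "\<not> p dvd n"
  shows "num_divisors (p * n) = 2 * num_divisors n"
proof -
  let ?D = "{m. 0 < m \<and> m dvd n}"
  have "{m. 0 < m \<and> m dvd p * n} = ?D \<union> (\<lambda>m. p * m) ` ?D"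
  proof (intro equalityI subsetI)
    fix m assume m: "m \<in> {m. 0 < m \<and> m dvd p * n}"
    show "m \<in> ?D \<union> (\<lambda>m. p * m) ` ?D"
    proof (cases "p dvd m")
      case True
      then obtain m' where "m = p * m'" by blast
      then show ?thesis using m assms(1) by (auto simp: prime_gt_0_nat)
    next
      case False
      then have "coprime m p"
        using prime_imp_coprime[OF assms(1) False] by (simp add: coprime_commute)
      then show ?thesis using m by (simp add: coprime_dvd_mult_right_iff)
    qed
  qed (use assms(1) prime_gt_0_nat in auto)
  moreover have "?D \<inter> (\<lambda>m. p * m) ` ?D = {}"
    using assms(3) by (auto dest: dvd_mult_left)
  moreover have "inj_on (\<lambda>m. p * m) ?D"
    using assms(1) by (simp add: inj_on_def prime_gt_0_nat)
  moreover have "finite ?D"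
    using finite_divisors_with[OF assms(2), of "\<lambda>m. 0 < m"] by (simp add: conj_commute)
  ultimately show ?thesis
    by (simp add: num_divisors_def card_Un_disjoint card_image)
qed

lemma card_odd_divisors_two_pow_five_pow:
  assumes "u \<ge> 1"
  shows "card {d. d dvd (2 ^ u * 5 ^ k :: nat) \<and> odd d} = k + 1"
proof -
  have "{d. d dvd (2 ^ u * 5 ^ k :: nat) \<and> odd d} = (\<lambda>i. 5 ^ i) ` {..k}"
  proof (intro equalityI subsetI)
    fix d assume d: "d \<in> {d. d dvd (2 ^ u * 5 ^ k :: nat) \<and> odd d}"
    then have "coprime d (2 ^ u)" by (simp add: coprime_power_right_iff)
    then have "d dvd 5 ^ k" using d by (simp add: coprime_dvd_mult_right_iff)
    then show "d \<in> (\<lambda>i. 5 ^ i) ` {..k}"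
      using divides_primepow_nat[of "5::nat"] by auto
  next
    fix d assume "d \<in> (\<lambda>i. 5 ^ i :: nat) ` {..k}"
    then show "d \<in> {d. d dvd (2 ^ u * 5 ^ k :: nat) \<and> odd d}"
      by (auto simp: le_imp_power_dvd)
  qed
  moreover have "inj_on (\<lambda>i. 5 ^ i :: nat) {..k}"
    by (rule inj_onI) simp
  ultimately show ?thesis by (simp add: card_image)
qed

lemma three_not_dvd_two_pow_five_pow: "\<not> 3 dvd (2 ^ u * 5 ^ k :: nat)"
proof
  assume "3 dvd (2 ^ u * 5 ^ k :: nat)"
  moreover have prime_3: "Factorial_Ring.prime (3::nat)" by simp
  ultimately have "3 dvd (2::nat) ^ u \<or> 3 dvd (5::nat) ^ k"
    by (simp add: prime_dvd_mult_iff)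
  then have "3 dvd (2::nat) \<or> 3 dvd (5::nat)"
    by (auto dest: prime_dvd_power[OF prime_3])
  then show False by simp
qed

definition multiples_mod :: "nat \<Rightarrow> nat \<Rightarrow> int set" where
  "multiples_mod N d = {y \<in> {0..<int N}. int d dvd y}"

lemma range_mult_mod_eq_multiples_mod:
  assumes "N > 0"
  shows "range (\<lambda>k::nat. (int k * b) mod int N) = multiples_mod N (nat (gcd b (int N)))"
proof (intro equalityI subsetI)
  fix y assume "y \<in> range (\<lambda>k::nat. (int k * b) mod int N)"
  then show "y \<in> multiples_mod N (nat (gcd b (int N)))"
    using assms by (auto simp: multiples_mod_def intro!: dvd_mod)
next
  fix y assume y: "y \<in> multiples_mod N (nat (gcd b (int N)))"
  then obtain t where t: "y = gcd b (int N) * t" by (auto simp: multiples_mod_def)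
  obtain u v where uv: "u * b + v * int N = gcd b (int N)" using bezout_int by blast
  define k where "k = nat ((u * t) mod int N)"
  have "(int k * b) mod int N = (t * (u * b)) mod int N"
    using assms by (simp add: k_def mod_simps algebra_simps)
  also have "t * (u * b) = t * gcd b (int N) + (- t * v) * int N"
    by (simp add: algebra_simps flip: uv)
  also have "(t * gcd b (int N) + (- t * v) * int N) mod int N = (t * gcd b (int N)) mod int N"
    by (rule mod_mult_self1)
  also have "\<dots> = y" using y t by (simp add: multiples_mod_def mult.commute)
  finally show "y \<in> range (\<lambda>k::nat. (int k * b) mod int N)"
    by (intro image_eqI[where x = k]) simp_all
qed

lemma mod_mem_multiples_mod:
  assumes "N > 0" "d dvd N"
  shows "int d mod int N \<in> multiples_mod N d"
  using assms by (simp add: multiples_mod_def dvd_mod)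

lemma multiples_mod_subset_imp_dvd:
  assumes "N > 0" "d dvd N" "e dvd N" "multiples_mod N d \<subseteq> multiples_mod N e"
  shows "e dvd d"
proof -
  have "int e dvd int d mod int N"
    using mod_mem_multiples_mod[OF assms(1,2)] assms(4) by (auto simp: multiples_mod_def)
  then have "int e dvd int d" using assms(3) by (simp add: dvd_mod_iff)
  then show ?thesis by simp
qed

lemma multiples_mod_inj:
  assumes "N > 0" "d dvd N" "e dvd N" "multiples_mod N d = multiples_mod N e"
  shows "d = e"
  using multiples_mod_subset_imp_dvd[of N d e] multiples_mod_subset_imp_dvd[of N e d] assms
  by (simp add: dvd_antisym)

lemma nat_gcd_mod_of_dvd:
  assumes "N > 0" "d dvd N"
  shows "nat (gcd (int d mod int N) (int N)) = d"
  using assms by (simp add: gcd_proj1_if_dvd_int)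

lemma C3_sdp_mult:
  "(a, b) \<otimes>\<^bsub>C3_sdp n\<^esub> (c, d) = ((a + (if even b then c else - c)) mod 3, (b + d) mod int n)"
  by (simp add: C3_sdp_def)

lemma C3_sdp_one: "\<one>\<^bsub>C3_sdp n\<^esub> = (0, 0)"
  by (simp add: C3_sdp_def)

lemma C3_sdp_carrier: "carrier (C3_sdp n) = {0..<3} \<times> {0..<int n}"
  by (simp add: C3_sdp_def)

lemma order_C3_sdp: "order (C3_sdp n) = 3 * n"
  by (simp add: order_def C3_sdp_carrier card_cartesian_product)

lemma group_C3_sdp:
  assumes "even n" "n > 0"
  shows "group (C3_sdp n)"
proof (rule groupI)
  have parity: "even (x mod int n) \<longleftrightarrow> even x" for x
    using assms(1) by (simp add: even_mod_even_iff)
  fix x y z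
  assume "x \<in> carrier (C3_sdp n)" "y \<in> carrier (C3_sdp n)" "z \<in> carrier (C3_sdp n)"
  then obtain a b c d e f where "x = (a, b)" "y = (c, d)" "z = (e, f)"
    by (cases x, cases y, cases z) auto
  then show "x \<otimes>\<^bsub>C3_sdp n\<^esub> y \<otimes>\<^bsub>C3_sdp n\<^esub> z = x \<otimes>\<^bsub>C3_sdp n\<^esub> (y \<otimes>\<^bsub>C3_sdp n\<^esub> z)"
    by (cases "even b"; cases "even d"; simp add: C3_sdp_mult parity mod_simps algebra_simps)
next
  fix x y assume "x \<in> carrier (C3_sdp n)" "y \<in> carrier (C3_sdp n)"
  then show "x \<otimes>\<^bsub>C3_sdp n\<^esub> y \<in> carrier (C3_sdp n)"
    using assms by (cases x, cases y) (auto simp: C3_sdp_mult C3_sdp_carrier)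
next
  show "\<one>\<^bsub>C3_sdp n\<^esub> \<in> carrier (C3_sdp n)"
    using assms by (simp add: C3_sdp_one C3_sdp_carrier)
next
  fix x assume "x \<in> carrier (C3_sdp n)"
  then show "\<one>\<^bsub>C3_sdp n\<^esub> \<otimes>\<^bsub>C3_sdp n\<^esub> x = x"
    by (cases x) (auto simp: C3_sdp_mult C3_sdp_one C3_sdp_carrier)
next
  fix x assume "x \<in> carrier (C3_sdp n)"
  then obtain a b where x: "x = (a, b)" "a \<in> {0..<3}" "b \<in> {0..<int n}"
    by (cases x) (auto simp: C3_sdp_carrier)
  have "even ((- b) mod int n) \<longleftrightarrow> even b"
    using assms(1) by (simp add: even_mod_even_iff)
  then show "\<exists>y\<in>carrier (C3_sdp n). y \<otimes>\<^bsub>C3_sdp n\<^esub> x = \<one>\<^bsub>C3_sdp n\<^esub>"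
    using x assms
    by (intro bexI[of _ "((if even b then - a else a) mod 3, (- b) mod int n)"])
       (auto simp: C3_sdp_mult C3_sdp_one C3_sdp_carrier mod_simps)
qed

lemma C3_sdp_pow:
  assumes "even n" "a \<in> {0..<3}" "b \<in> {0..<int n}"
  shows "(a, b) [^]\<^bsub>C3_sdp n\<^esub> (k::nat) =
    (if even b then ((int k * a) mod 3, (int k * b) mod int n)
     else (if odd k then a else 0, (int k * b) mod int n))"
proof (induction k)
  case 0
  then show ?case by (simp add: C3_sdp_one)
next
  case (Suc k)
  have "even ((int k * b) mod int n) \<longleftrightarrow> even k \<or> even b"
    using assms(1) by (simp add: even_mod_even_iff)
  with Suc assms show ?case
    by (cases "even b"; cases "even k"; simp add: C3_sdp_mult mod_simps algebra_simps)
qed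

lemma C3_sdp_iso_imp_eq: "C3_sdp m \<cong> C3_sdp n \<Longrightarrow> m = n"
  by (drule iso_same_card) (simp add: C3_sdp_carrier card_cartesian_product)

text \<open>The subgroup generated by \<open>(a, b)\<close> with \<open>b\<close> odd: its odd powers have first
  component \<open>a\<close>, its even powers first component \<open>0\<close>, and \<open>y\<close> has the parity of the exponent.\<close>

definition twisted_multiples_mod :: "nat \<Rightarrow> int \<Rightarrow> nat \<Rightarrow> (int \<times> int) set" where
  "twisted_multiples_mod n a d = (\<lambda>y. (if odd y then a else 0, y)) ` multiples_mod n d"

lemma generate_C3_sdp:
  assumes "even n" "\<not> 3 dvd n" and a: "a \<in> {0..<3}" and b: "b \<in> {0..<int n}"
  shows "generate (C3_sdp n) {(a, b)} =
    (if even b then multiples_mod 3 (nat (gcd a 3)) \<times> multiples_mod n (nat (gcd b (int n)))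
     else twisted_multiples_mod n a (nat (gcd b (int n))))"
  (is "_ = ?rhs")
proof -
  have "n > 0" using assms(2) by (cases n) auto
  have "generate (C3_sdp n) {(a, b)} = {(a, b) [^]\<^bsub>C3_sdp n\<^esub> k | k. k \<in> (UNIV :: nat set)}"
    using a b by (intro group.generate_pow_on_finite_carrier group_C3_sdp assms(1) \<open>n > 0\<close>)
      (simp_all add: C3_sdp_carrier)
  also have "\<dots> = range (\<lambda>k::nat. (a, b) [^]\<^bsub>C3_sdp n\<^esub> k)"
    by blast
  also have "\<dots> = (if even b then range (\<lambda>k::nat. ((int k * a) mod 3, (int k * b) mod int n))
      else range (\<lambda>k::nat. (if odd k then a else 0, (int k * b) mod int n)))"
    using C3_sdp_pow[OF assms(1) a b] by simp
  also have "\<dots> = ?rhs"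
  proof (cases "even b")
    case True
    have "coprime 3 n"
      using assms(2) by (simp add: prime_imp_coprime)
    then have "range (\<lambda>k::nat. ((int k * a) mod 3, (int k * b) mod int n))
        = range (\<lambda>k::nat. (int k * a) mod 3) \<times> range (\<lambda>k::nat. (int k * b) mod int n)"
      by (rule range_pair_of_coprime_periods) (simp_all add: of_nat_mod mod_simps)
    with True show ?thesis
      using range_mult_mod_eq_multiples_mod[of 3 a] range_mult_mod_eq_multiples_mod[OF \<open>n > 0\<close>, of b] by simp
  next
    case False
    have "odd ((int k * b) mod int n) \<longleftrightarrow> odd k" for k :: nat
      using assms(1) False by (simp add: even_mod_even_iff)
    then have "range (\<lambda>k::nat. (if odd k then a else 0, (int k * b) mod int n))
        = (\<lambda>y. (if odd y then a else 0, y)) ` range (\<lambda>k::nat. (int k * b) mod int n)"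
      by (auto simp: image_image)
    with False show ?thesis
      using range_mult_mod_eq_multiples_mod[OF \<open>n > 0\<close>, of b] by (simp add: twisted_multiples_mod_def)
  qed
  finally show ?thesis .
qed

lemma twisted_multiples_mod_snd: "snd ` twisted_multiples_mod n a d = multiples_mod n d"
  by (simp add: twisted_multiples_mod_def image_image)

lemma mod_mem_twisted_multiples_mod:
  assumes "even n" "n > 0" "odd d" "d dvd n"
  shows "(a, int d mod int n) \<in> twisted_multiples_mod n a d"
proof -
  have "odd (int d mod int n)" using assms(1,3) by (simp add: even_mod_even_iff)
  then show ?thesis
    using mod_mem_multiples_mod[OF assms(2,4)] unfolding twisted_multiples_mod_def by force
qed

text \<open>The divisors \<open>1\<close> and \<open>3\<close> of \<open>3\<close> index the two subgroups \<open>C\<^sub>3\<close> and \<open>{0}\<close> of \<open>C\<^sub>3\<close>.\<close>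

lemma cyclic_subgroups_C3_sdp:
  assumes "even n" "\<not> 3 dvd n"
  shows "cyclic_subgroups (C3_sdp n) =
    (\<lambda>(e, d). multiples_mod 3 e \<times> multiples_mod n d) ` ({1, 3} \<times> {d. d dvd n \<and> even d}) \<union>
    (\<lambda>(a, d). twisted_multiples_mod n a d) ` ({0..<3} \<times> {d. d dvd n \<and> odd d})"
  (is "_ = ?X \<union> ?Y")
proof (intro equalityI subsetI)
  have "n > 0" using assms(2) by (cases n) auto
  fix H assume "H \<in> cyclic_subgroups (C3_sdp n)"
  then obtain a b where a: "a \<in> {0..<3}" and b: "b \<in> {0..<int n}"
    and H: "H = generate (C3_sdp n) {(a, b)}"
    by (auto simp: cyclic_subgroups_def C3_sdp_carrier)
  define d where "d = nat (gcd b (int n))"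
  have d_eq: "int d = gcd b (int n)" by (simp add: d_def)
  then have "int d dvd b" "d dvd n" by (simp, metis gcd_dvd2 of_nat_dvd_iff)
  show "H \<in> ?X \<union> ?Y"
  proof (cases "even b")
    case True
    have "a \<in> {0, 1, 2}" using a by auto
    then have "nat (gcd a 3) \<in> {1, 3}" by auto
    moreover have "even (int d)" using True assms(1) by (simp add: d_eq)
    ultimately have "(nat (gcd a 3), d) \<in> {1, 3} \<times> {d. d dvd n \<and> even d}"
      using \<open>d dvd n\<close> by simp
    moreover have "H = multiples_mod 3 (nat (gcd a 3)) \<times> multiples_mod n d"
      using H True generate_C3_sdp[OF assms a b] by (simp add: d_def)
    ultimately show ?thesis by blast
  next
    case False
    then have "odd d" using \<open>int d dvd b\<close> by (metis dvd_trans even_of_nat)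
    then have "(a, d) \<in> {0..<3} \<times> {d. d dvd n \<and> odd d}"
      using a \<open>d dvd n\<close> by simp
    moreover have "H = twisted_multiples_mod n a d"
      using H False generate_C3_sdp[OF assms a b] by (simp add: d_def)
    ultimately show ?thesis by blast
  qed
next
  have "n > 0" using assms(2) by (cases n) auto
  have generated: "generate (C3_sdp n) {(a, int d mod int n)} \<in> cyclic_subgroups (C3_sdp n)"
    if "a \<in> {0..<3}" for a d
    using that \<open>n > 0\<close> unfolding cyclic_subgroups_def C3_sdp_carrier
    by (intro CollectI bexI[of _ "(a, int d mod int n)"]) auto
  fix H assume "H \<in> ?X \<union> ?Y"
  then consider
      e d where "e \<in> {1, 3}" "d dvd n" "even d" "H = multiples_mod 3 e \<times> multiples_mod n d"
    | a d where "a \<in> {0..<3}" "d dvd n" "odd d" "H = twisted_multiples_mod n a d"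
    by auto
  then show "H \<in> cyclic_subgroups (C3_sdp n)"
  proof cases
    case (1 e d)
    define a :: int where "a = (if e = 3 then 0 else 1)"
    have "even (int d mod int n)" using 1 assms(1) by (simp add: even_mod_even_iff)
    moreover have "nat (gcd a 3) = e" using 1 by (auto simp: a_def)
    ultimately have "generate (C3_sdp n) {(a, int d mod int n)} = H"
      using 1 \<open>n > 0\<close> generate_C3_sdp[OF assms, of a "int d mod int n"]
      by (simp add: a_def nat_gcd_mod_of_dvd)
    then show ?thesis using generated[of a d] by (simp add: a_def)
  next
    case (2 a d)
    have "odd (int d mod int n)" using 2 assms(1) by (simp add: even_mod_even_iff)
    then have "generate (C3_sdp n) {(a, int d mod int n)} = H"
      using 2 \<open>n > 0\<close> generate_C3_sdp[OF assms, of a "int d mod int n"]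
      by (simp add: nat_gcd_mod_of_dvd)
    then show ?thesis using generated[of a d] 2(1) by simp
  qed
qed

lemma inj_on_times_multiples_mod:
  assumes "M > 0" "N > 0"
  shows "inj_on (\<lambda>(e, d). multiples_mod M e \<times> multiples_mod N d) ({e. e dvd M} \<times> {d. d dvd N})"
proof (rule inj_onI, clarify)
  fix e d e' d'
  assume "e dvd M" "d dvd N" "e' dvd M" "d' dvd N"
    and eq: "multiples_mod M e \<times> multiples_mod N d = multiples_mod M e' \<times> multiples_mod N d'"
  have "0 \<in> multiples_mod M e" "0 \<in> multiples_mod N d"
    using assms by (simp_all add: multiples_mod_def)
  then have "multiples_mod M e \<noteq> {}" "multiples_mod N d \<noteq> {}"
    by auto
  then have "multiples_mod M e = multiples_mod M e'" "multiples_mod N d = multiples_mod N d'"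
    using eq by (simp_all add: times_eq_iff)
  then show "e = e' \<and> d = d'"
    using multiples_mod_inj[OF assms(1) \<open>e dvd M\<close> \<open>e' dvd M\<close>]
      multiples_mod_inj[OF assms(2) \<open>d dvd N\<close> \<open>d' dvd N\<close>]
    by simp
qed

lemma inj_on_twisted_multiples_mod:
  assumes "even n" "n > 0"
  shows "inj_on (\<lambda>(a, d). twisted_multiples_mod n a d) (UNIV \<times> {d. d dvd n \<and> odd d})"
proof (rule inj_onI, clarify)
  fix a d a' d'
  assume "d dvd n" "odd d" "d' dvd n"
    and eq: "twisted_multiples_mod n a d = twisted_multiples_mod n a' d'"
  show "a = a' \<and> d = d'"
  proof
    show "d = d'"
      using multiples_mod_inj[OF assms(2) \<open>d dvd n\<close> \<open>d' dvd n\<close>] arg_cong[OF eq, of "image snd"]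
      by (simp add: twisted_multiples_mod_snd)
    have "odd (int d mod int n)"
      using assms(1) \<open>odd d\<close> by (simp add: even_mod_even_iff)
    moreover have "(a, int d mod int n) \<in> twisted_multiples_mod n a' d'"
      using mod_mem_twisted_multiples_mod[OF assms \<open>odd d\<close> \<open>d dvd n\<close>, of a] eq by simp
    then obtain y where "(a, int d mod int n) = (if odd y then a' else 0, y)"
      unfolding twisted_multiples_mod_def by (rule imageE)
    ultimately show "a = a'"
      by auto
  qed
qed

lemma twisted_multiples_mod_ne_times:
  assumes "even n" "n > 0" "even d" "odd d'" "d' dvd n"
  shows "twisted_multiples_mod n a d' \<noteq> A \<times> multiples_mod n d"
proof
  assume "twisted_multiples_mod n a d' = A \<times> multiples_mod n d"
  then have "(a, int d' mod int n) \<in> A \<times> multiples_mod n d"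
    using mod_mem_twisted_multiples_mod[OF assms(1,2,4,5), of a] by simp
  then have "int d dvd int d' mod int n"
    by (simp add: multiples_mod_def)
  moreover have "even (int d)"
    using assms(3) by simp
  ultimately have "even (int d' mod int n)"
    by (rule dvd_trans[rotated])
  then show False
    using assms(1,4) by (simp add: even_mod_even_iff)
qed

lemma card_cyclic_subgroups_C3_sdp_by_parity:
  assumes "even n" "\<not> 3 dvd n"
  shows "card (cyclic_subgroups (C3_sdp n)) =
    2 * card {d. d dvd n \<and> even d} + 3 * card {d. d dvd n \<and> odd d}"
proof -
  have "n > 0" using assms(2) by (cases n) auto
  let ?E = "{d. d dvd n \<and> even d}" and ?O = "{d. d dvd n \<and> odd d}"
  let ?f = "\<lambda>(e, d). multiples_mod 3 e \<times> multiples_mod n d"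
  let ?g = "\<lambda>(a, d). twisted_multiples_mod n a d"
  have "finite ?E" "finite ?O"
    using finite_divisors_with[OF \<open>n > 0\<close>, of even] finite_divisors_with[OF \<open>n > 0\<close>, of odd]
    by simp_all
  have "inj_on ?f ({1, 3} \<times> ?E)"
    by (rule inj_on_subset[OF inj_on_times_multiples_mod]) (use \<open>n > 0\<close> in auto)
  then have card_X: "card (?f ` ({1, 3} \<times> ?E)) = 2 * card ?E"
    by (simp add: card_image card_cartesian_product)
  have "inj_on ?g ({0..<3} \<times> ?O)"
    by (rule inj_on_subset[OF inj_on_twisted_multiples_mod[OF assms(1) \<open>n > 0\<close>]]) auto
  then have card_Y: "card (?g ` ({0..<3} \<times> ?O)) = 3 * card ?O"
    by (simp add: card_image card_cartesian_product)
  have "multiples_mod 3 e \<times> multiples_mod n d \<noteq> twisted_multiples_mod n a d'"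
    if "d \<in> ?E" "d' \<in> ?O" for a d' e d
    by (rule not_sym, rule twisted_multiples_mod_ne_times[OF assms(1) \<open>n > 0\<close>]) (use that in simp_all)
  then have "?f ` ({1, 3} \<times> ?E) \<inter> ?g ` ({0..<3} \<times> ?O) = {}"
    by auto
  then show ?thesis
    unfolding cyclic_subgroups_C3_sdp[OF assms] card_X[symmetric] card_Y[symmetric]
    using \<open>finite ?E\<close> \<open>finite ?O\<close> by (intro card_Un_disjoint) auto
qed

lemma card_cyclic_subgroups_C3_sdp:
  assumes "even n" "\<not> 3 dvd n"
  shows "card (cyclic_subgroups (C3_sdp n)) =
    num_divisors (order (C3_sdp n)) + card {d. d dvd n \<and> odd d}"
proof -
  have "n > 0" using assms(2) by (cases n) auto
  have "num_divisors (order (C3_sdp n)) = 2 * num_divisors n"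
    using num_divisors_prime_mult[of 3 n] assms \<open>n > 0\<close> by (simp add: order_C3_sdp)
  then show ?thesis
    using card_cyclic_subgroups_C3_sdp_by_parity[OF assms] num_divisors_by_parity[OF \<open>n > 0\<close>]
    by simp
qed

theorem mainTheorem15:
  fixes \<gamma> :: nat
  assumes "\<gamma> \<ge> 1"
  shows "(\<exists>F :: nat \<Rightarrow> (int \<times> int) monoid.
            (\<forall>i. group (F i) \<and> finite (carrier (F i)) \<and>
                 card (cyclic_subgroups (F i)) = num_divisors (order (F i)) + \<gamma>) \<and>
            (\<forall>i j. i \<noteq> j \<longrightarrow> \<not> (F i \<cong> F j)))
       \<and> (\<forall>u::nat. u \<ge> 1 \<longrightarrow>
            (let G = C3_sdp (2 ^ u * 5 ^ (\<gamma> - 1)) in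
               group G \<and> card (cyclic_subgroups G) = num_divisors (order G) + \<gamma>))"
proof -
  have cyclic_count: "group G \<and> card (cyclic_subgroups G) = num_divisors (order G) + \<gamma>"
    if "u \<ge> 1" and G: "G = C3_sdp (2 ^ u * 5 ^ (\<gamma> - 1))" for u G
  proof -
    have "even (2 ^ u * 5 ^ (\<gamma> - 1) :: nat)" using \<open>u \<ge> 1\<close> by simp
    then show ?thesis
      using G assms group_C3_sdp card_cyclic_subgroups_C3_sdp three_not_dvd_two_pow_five_pow
        card_odd_divisors_two_pow_five_pow[OF \<open>u \<ge> 1\<close>]
      by simp
  qed
  define F where "F i = C3_sdp (2 ^ Suc i * 5 ^ (\<gamma> - 1))" for i
  have "group (F i) \<and> finite (carrier (F i)) \<and>
      card (cyclic_subgroups (F i)) = num_divisors (order (F i)) + \<gamma>" for i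
    using cyclic_count[of "Suc i" "F i"] by (simp add: F_def C3_sdp_carrier)
  moreover have "\<not> (F i \<cong> F j)" if "i \<noteq> j" for i j
    using that C3_sdp_iso_imp_eq unfolding F_def by fastforce
  ultimately show ?thesis
    using cyclic_count by (auto simp: Let_def)
qed

end
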